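(* In the setting described in the context, for every $\gamma \in (0,\frac12)$ and every $\lambda_0 > 1$ we have, at every point of $\mathbb{R}^n$, \[\max\{u_0,\dots,u_q\} \leq \hat u_q \leq \max\{u_0,\dots,u_q\} + \sum_{k=1}^q \lambda_k^{-1}.\] In particular, $\bigcap_{m=0}^q \{u_m \leq -\lambda_0^{-1}\} \subset \hat\Omega \subset \Omega$.
   Context: $n\ge 3$, $u_0,\dots,u_q$ are non-constant linear (affine) functions on $\mathbb{R}^n$, and $\Omega=\bigcap_{m=0}^q\{u_m\le 0\}$ is a compact convex polytope with non-empty interior. Fix a smooth even function $\eta:\mathbb{R}\to\mathbb{R}$ with $\eta(t)=|t|$ for $|t|\ge \frac12$ and $\eta''\ge 0$ everywhere. For $\gamma\in(0,\frac12)$ and $\lambda_0>1$ set $\lambda_k=\gamma^{-k}\lambda_0$ for $1\le k\le q$. Define $\hat u_0=u_0$ and, for $1\le k\le q$, $\hat u_k=\frac12\big(\hat u_{k-1}+u_k+\lambda_k^{-1}\eta(\lambda_k(\hat u_{k-1}-u_k))\big)$. Set $\hat\Omega=\{\hat u_q\le 0\}$. *)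

theory Defs
  imports "HOL-Analysis.Analysis"
begin

definition lam :: "real \<Rightarrow> real \<Rightarrow> nat \<Rightarrow> real" where
  "lam \<gamma> l0 k = l0 / \<gamma> ^ k"

primrec uhat :: "(real \<Rightarrow> real) \<Rightarrow> real \<Rightarrow> real \<Rightarrow> (nat \<Rightarrow> 'a \<Rightarrow> real) \<Rightarrow> nat \<Rightarrow> 'a \<Rightarrow> real" where
  "uhat \<eta> \<gamma> l0 u 0 x = u 0 x"
| "uhat \<eta> \<gamma> l0 u (Suc k) x =
     (uhat \<eta> \<gamma> l0 u k x + u (Suc k) x
      + (1 / lam \<gamma> l0 (Suc k)) * \<eta> (lam \<gamma> l0 (Suc k) * (uhat \<eta> \<gamma> l0 u k x - u (Suc k) x))) / 2"

end

theory Submission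
  imports Defs
begin

text \<open>Since \<open>(a + b + \<bar>a - b\<bar>) / 2 = max a b\<close>, each step of the recursion is a
  smoothed maximum, and it suffices to know \<open>\<bar>t\<bar> \<le> \<eta> t \<le> \<bar>t\<bar> + 1\<close>. This holds because
  \<open>\<eta>'\<close> is nondecreasing and equals \<open>\<plusminus>1\<close> outside \<open>[-1/2, 1/2]\<close>, so \<open>\<eta> t \<plusminus> t\<close> are
  monotone. Then the \<open>k\<close>-th step overshoots the maximum by at most \<open>1/\<lambda>\<^sub>k\<close>, and
  \<open>\<Sum>\<^sub>k 1/\<lambda>\<^sub>k = \<lambda>\<^sub>0\<^sup>-\<^sup>1 \<Sum>\<^sub>k \<gamma>\<^sup>k < \<lambda>\<^sub>0\<^sup>-\<^sup>1\<close> as \<open>\<gamma> < 1/2\<close>.\<close>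

lemma smoothed_abs_deriv_bounds:
  fixes f f' :: "real \<Rightarrow> real" and c :: real
  assumes deriv: "\<And>t. (f has_real_derivative f' t) (at t)"
    and mono: "mono f'"
    and c: "c > 0"
    and abs: "\<And>t. \<bar>t\<bar> \<ge> c \<Longrightarrow> f t = \<bar>t\<bar>"
  shows "-1 \<le> f' t" and "f' t \<le> 1"
proof -
  have right: "f' s = 1" if "s > c" for s
  proof -
    have "(f has_real_derivative 1) (at s)"
      by (rule has_field_derivative_transform_within_open[where f = "\<lambda>t. t" and S = "{c<..}"])
        (use that c abs in auto)
    with deriv show ?thesis by (rule DERIV_unique)
  qed
  have left: "f' s = -1" if "s < -c" for s
  proof -
    have "((\<lambda>t. -t) has_real_derivative -1) (at s)"
      by (rule DERIV_minus[OF DERIV_ident])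
    then have "(f has_real_derivative -1) (at s)"
      by (rule has_field_derivative_transform_within_open[where S = "{..<-c}"])
        (use that c abs in auto)
    with deriv show ?thesis by (rule DERIV_unique)
  qed
  have "f' (min t (- c - 1)) \<le> f' t" and "f' t \<le> f' (max t (c + 1))"
    using mono by (auto intro: monoD)
  then show "-1 \<le> f' t" and "f' t \<le> 1"
    using left[of "min t (- c - 1)"] right[of "max t (c + 1)"] c by auto
qed

lemma smoothed_abs_bounds:
  fixes f f' :: "real \<Rightarrow> real" and c :: real
  assumes deriv: "\<And>t. (f has_real_derivative f' t) (at t)"
    and mono: "mono f'"
    and c: "c > 0"
    and abs: "\<And>t. \<bar>t\<bar> \<ge> c \<Longrightarrow> f t = \<bar>t\<bar>"
  shows "\<bar>t\<bar> \<le> f t" and "f t \<le> \<bar>t\<bar> + 2 * c"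
proof -
  note f'_bounds = smoothed_abs_deriv_bounds[OF deriv mono c abs]
  have decr: "f b - b \<le> f a - a" if "a \<le> b" for a b
  proof (rule DERIV_nonpos_imp_nonincreasing[where f = "\<lambda>t. f t - t", OF that])
    show "\<exists>y. ((\<lambda>t. f t - t) has_real_derivative y) (at x) \<and> y \<le> 0" for x
      using DERIV_diff[OF deriv DERIV_ident, of x] f'_bounds(2)[of x] by auto
  qed
  have incr: "f a + a \<le> f b + b" if "a \<le> b" for a b
  proof (rule DERIV_nonneg_imp_nondecreasing[where f = "\<lambda>t. f t + t", OF that])
    show "\<exists>y. ((\<lambda>t. f t + t) has_real_derivative y) (at x) \<and> y \<ge> 0" for x
      using DERIV_add[OF deriv DERIV_ident, of x] f'_bounds(1)[of x] by auto
  qed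
  show "\<bar>t\<bar> \<le> f t"
  proof (cases "\<bar>t\<bar> \<ge> c")
    case False
    then have "-c < t" "t < c"
      by auto
    then show ?thesis
      using decr[of t c] incr[of "-c" t] abs[of c] abs[of "-c"] by (simp add: abs_le_iff)
  qed (simp add: abs)
  show "f t \<le> \<bar>t\<bar> + 2 * c"
  proof (cases "\<bar>t\<bar> \<ge> c")
    case False
    then have "-c < t"
      by auto
    then show ?thesis
      using decr[of "-c" t] abs[of "-c"] c by simp
  qed (use abs c in simp)
qed

lemma smoothed_max_bounds:
  fixes \<eta> :: "real \<Rightarrow> real" and L a b c :: real
  assumes L: "L > 0"
    and lower: "\<And>t. \<bar>t\<bar> \<le> \<eta> t" and upper: "\<And>t. \<eta> t \<le> \<bar>t\<bar> + c"
  shows "max a b \<le> (a + b + 1 / L * \<eta> (L * (a - b))) / 2"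
    and "(a + b + 1 / L * \<eta> (L * (a - b))) / 2 \<le> max a b + c / (2 * L)"
proof -
  define e where "e = 1 / L * \<eta> (L * (a - b))"
  have max_eq: "max a b = (a + b + \<bar>a - b\<bar>) / 2"
    by (simp add: max_def)
  have "L * \<bar>a - b\<bar> \<le> \<eta> (L * (a - b))"
    using lower[of "L * (a - b)"] L by (simp add: abs_mult)
  then have lo: "\<bar>a - b\<bar> \<le> e"
    unfolding e_def using L by (simp add: field_simps)
  have "\<eta> (L * (a - b)) \<le> L * \<bar>a - b\<bar> + c"
    using upper[of "L * (a - b)"] L by (simp add: abs_mult)
  then have hi: "e \<le> \<bar>a - b\<bar> + c / L"
    unfolding e_def using L by (simp add: field_simps)
  show "max a b \<le> (a + b + 1 / L * \<eta> (L * (a - b))) / 2"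
    unfolding e_def[symmetric] max_eq using lo by simp
  have "(a + b + e) / 2 \<le> (a + b + \<bar>a - b\<bar> + c / L) / 2"
    using hi by (intro divide_right_mono) linarith+
  also have "\<dots> = max a b + c / (2 * L)"
    unfolding max_eq by (simp add: add_divide_distrib)
  finally show "(a + b + 1 / L * \<eta> (L * (a - b))) / 2 \<le> max a b + c / (2 * L)"
    unfolding e_def .
qed

lemma lam_pos: "0 < \<gamma> \<Longrightarrow> 0 < l0 \<Longrightarrow> 0 < lam \<gamma> l0 k"
  by (simp add: lam_def)

lemma uhat_bounds:
  assumes lower: "\<And>t. \<bar>t\<bar> \<le> \<eta> t" and upper: "\<And>t. \<eta> t \<le> \<bar>t\<bar> + 2"
    and "0 < \<gamma>" "0 < l0"
  shows "(MAX m\<in>{0..k}. u m x) \<le> uhat \<eta> \<gamma> l0 u k x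
     \<and> uhat \<eta> \<gamma> l0 u k x \<le> (MAX m\<in>{0..k}. u m x) + (\<Sum>j=1..k. 1 / lam \<gamma> l0 j)"
proof (induction k)
  case (Suc k)
  define M where "M = (MAX m\<in>{0..k}. u m x)"
  define S where "S = (\<Sum>j=1..k. 1 / lam \<gamma> l0 j)"
  define a where "a = uhat \<eta> \<gamma> l0 u k x"
  define b where "b = u (Suc k) x"
  define L where "L = lam \<gamma> l0 (Suc k)"
  have IH: "M \<le> a" "a \<le> M + S"
    using Suc.IH unfolding M_def S_def a_def by simp_all
  have L: "0 < L"
    unfolding L_def using lam_pos assms(3,4) by blast
  have S: "0 \<le> S"
    unfolding S_def by (rule sum_nonneg) (use lam_pos assms(3,4) in \<open>simp add: less_imp_le\<close>)
  have max_Suc: "(MAX m\<in>{0..Suc k}. u m x) = max M b"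
    unfolding M_def b_def by (simp add: atLeast0_atMost_Suc max.commute)
  have uhat_Suc: "uhat \<eta> \<gamma> l0 u (Suc k) x = (a + b + 1 / L * \<eta> (L * (a - b))) / 2"
    unfolding a_def b_def L_def by simp
  have sum_Suc: "(\<Sum>j=1..Suc k. 1 / lam \<gamma> l0 j) = S + 1 / L"
    unfolding S_def L_def by simp
  have "max M b \<le> max a b" and "max a b \<le> max M b + S"
    using IH S by (auto simp: max_def)
  moreover have "2 / (2 * L) = 1 / L"
    by simp
  ultimately show ?case
    unfolding max_Suc uhat_Suc sum_Suc
    using smoothed_max_bounds[OF L lower upper, of a b] by linarith
qed simp

lemma sum_inverse_lam_less:
  assumes "0 < \<gamma>" "\<gamma> < 1/2" "0 < l0"
  shows "(\<Sum>j=1..q. 1 / lam \<gamma> l0 j) < 1 / l0"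
proof -
  have "(1 - \<gamma>) * (\<Sum>j=1..q. \<gamma> ^ j) = \<gamma> - \<gamma> ^ Suc q"
    using assms by (simp add: sum_gp field_simps)
  also have "\<dots> \<le> \<gamma>"
    using assms by simp
  also have "\<dots> < 1 - \<gamma>"
    using assms by simp
  finally have "(\<Sum>j=1..q. \<gamma> ^ j) < 1"
    using assms by simp
  then show ?thesis
    using assms by (simp add: lam_def sum_divide_distrib[symmetric] divide_strict_right_mono)
qed

theorem lemma2p7:
  fixes u :: "nat \<Rightarrow> real ^ 'n \<Rightarrow> real" and q :: nat
    and \<eta> :: "real \<Rightarrow> real" and D :: "nat \<Rightarrow> real \<Rightarrow> real"
    and \<gamma> l0 :: real
  assumes dim: "CARD('n) \<ge> 3"
    and affine_u: "\<And>m. m \<le> q \<Longrightarrow> \<exists>a b. a \<noteq> 0 \<and> u m = (\<lambda>x. a \<bullet> x + b)"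
    and Omega_compact: "compact {x. \<forall>m\<le>q. u m x \<le> 0}"
    and Omega_interior: "interior {x. \<forall>m\<le>q. u m x \<le> 0} \<noteq> {}"
    and eta_smooth0: "D 0 = \<eta>"
    and eta_smooth: "\<And>k t. (D k has_real_derivative D (Suc k) t) (at t)"
    and eta_even: "\<And>t. \<eta> (- t) = \<eta> t"
    and eta_abs: "\<And>t. \<bar>t\<bar> \<ge> 1/2 \<Longrightarrow> \<eta> t = \<bar>t\<bar>"
    and eta_convex: "\<And>t. D 2 t \<ge> 0"
    and gamma: "0 < \<gamma>" "\<gamma> < 1/2"
    and lambda0: "l0 > 1"
  shows "(\<forall>x. (MAX m\<in>{0..q}. u m x) \<le> uhat \<eta> \<gamma> l0 u q x
            \<and> uhat \<eta> \<gamma> l0 u q x \<le> (MAX m\<in>{0..q}. u m x) + (\<Sum>k=1..q. 1 / lam \<gamma> l0 k))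
       \<and> {x. \<forall>m\<le>q. u m x \<le> - 1 / l0} \<subseteq> {x. uhat \<eta> \<gamma> l0 u q x \<le> 0}
       \<and> {x. uhat \<eta> \<gamma> l0 u q x \<le> 0} \<subseteq> {x. \<forall>m\<le>q. u m x \<le> 0}"
proof -
  have deriv: "(\<eta> has_real_derivative D 1 t) (at t)" for t
    using eta_smooth[of 0] eta_smooth0 by simp
  have mono_D1: "mono (D 1)"
    by (rule monoI, rule DERIV_nonneg_imp_nondecreasing)
      (use eta_smooth[of 1] eta_convex in \<open>auto simp: numeral_2_eq_2\<close>)
  have eta_bounds: "\<bar>t\<bar> \<le> \<eta> t" "\<eta> t \<le> \<bar>t\<bar> + 1" for t
    using smoothed_abs_bounds[where c = "1/2", OF deriv mono_D1 _ eta_abs] by simp_all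
  have bounds: "(MAX m\<in>{0..q}. u m x) \<le> uhat \<eta> \<gamma> l0 u q x
      \<and> uhat \<eta> \<gamma> l0 u q x \<le> (MAX m\<in>{0..q}. u m x) + (\<Sum>j=1..q. 1 / lam \<gamma> l0 j)" for x
  proof (rule uhat_bounds)
    show "\<eta> t \<le> \<bar>t\<bar> + 2" for t
      using eta_bounds(2)[of t] by simp
  qed (use eta_bounds gamma lambda0 in auto)
  have small_sum: "(\<Sum>j=1..q. 1 / lam \<gamma> l0 j) < 1 / l0"
    using sum_inverse_lam_less gamma lambda0 by simp
  have inner: "uhat \<eta> \<gamma> l0 u q x \<le> 0" if "\<forall>m\<le>q. u m x \<le> - 1 / l0" for x
  proof -
    have "(MAX m\<in>{0..q}. u m x) \<le> - 1 / l0"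
      using that by simp
    then show ?thesis
      using bounds[of x] small_sum by linarith
  qed
  have outer: "u m x \<le> 0" if "uhat \<eta> \<gamma> l0 u q x \<le> 0" "m \<le> q" for x m
  proof -
    have "u m x \<le> (MAX m\<in>{0..q}. u m x)"
      using that(2) by simp
    then show ?thesis
      using bounds[of x] that(1) by linarith
  qed
  show ?thesis
    using bounds inner outer by blast
qed

end
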